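(* Let $f:[0,f_0)\to[0,\infty)$ ($f_0>0$) be increasing, convex, of class $C^1$, with $f(0)=f'(0)=0$; let $K\subset\mathbb R^d$ be closed and convex with $B_r(0)\subset K\subset B_R(0)$, $0<r\le R$; and let $\varphi(x)=f(M_K(x))$. Then $\varphi$ satisfies property (X) with $D=R/r$; i.e., for every $C>0$, every $\zeta_0\in\mathcal D_C(\varphi)$, every $\alpha\in L^\infty_{loc}(0,\infty)$ with $\alpha(t)\ge\alpha_0>0$ a.e., and every $g\in L^\infty(0,\infty)^d$ with $|g(t)|\le C$ a.e., the solution $\zeta\in W^{1,1}_{loc}(0,\infty)^d$ of $\alpha(t)\zeta_t+\partial\varphi(\zeta)\ni g(t)$ a.e., $\zeta(0)=\zeta_0$, satisfies $|g(t)-\alpha(t)\zeta_t(t)|\le (R/r)C$ (and hence $|\alpha(t)\zeta_t(t)|\le(R/r+1)C$) a.e.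
   Context: $M_K(x)=\inf\{s>0:x/s\in K\}$ is the Minkowski functional of $K$; $\varphi=+\infty$ where $M_K(x)\notin[0,f_0)$. For a proper convex lsc $\varphi$ and $C>0$, $\mathcal D_C(\varphi)=\{\chi\in\mathrm{dom}\,\varphi:\exists\xi\in\partial\varphi(\chi),|\xi|\le C\}$. Property (X) with constant $D$: for every $C>0$, $\zeta_0\in\mathcal D_C(\varphi)$, $\alpha\in L^\infty_{loc}(0,\infty)$ with $\alpha\ge\alpha_0>0$ a.e., and $g\in L^\infty(0,\infty)^d$ with $|g|\le C$ a.e., the solution of $\alpha\zeta_t+\partial\varphi(\zeta)\ni g$, $\zeta(0)=\zeta_0$, satisfies $|g-\alpha\zeta_t|\le DC$ a.e. *)

theory Defs
  imports "HOL-Analysis.Analysis"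
begin

definition minkowski :: "'a::euclidean_space set \<Rightarrow> 'a \<Rightarrow> real" where
  "minkowski K x = Inf {s. s > 0 \<and> scaleR (1 / s) x \<in> K}"

text \<open>phi(x) = f(M_K(x)) if M_K(x) \<in> [0,f0), +\<infinity> otherwise (f0 may be +\<infinity>).\<close>
definition phi_of :: "(real \<Rightarrow> real) \<Rightarrow> ereal \<Rightarrow> 'a::euclidean_space set \<Rightarrow> 'a \<Rightarrow> ereal" where
  "phi_of f f0 K x =
     (if 0 \<le> minkowski K x \<and> ereal (minkowski K x) < f0 then ereal (f (minkowski K x)) else \<infinity>)"

definition edom :: "('a \<Rightarrow> ereal) \<Rightarrow> 'a set" where
  "edom \<phi> = {x. \<phi> x < \<infinity>}"

definition subdiff :: "('a::euclidean_space \<Rightarrow> ereal) \<Rightarrow> 'a \<Rightarrow> 'a set" where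
  "subdiff \<phi> x = {\<xi>. \<bar>\<phi> x\<bar> \<noteq> \<infinity> \<and> (\<forall>y. \<phi> x + ereal (\<xi> \<bullet> (y - x)) \<le> \<phi> y)}"

definition DC :: "real \<Rightarrow> ('a::euclidean_space \<Rightarrow> ereal) \<Rightarrow> 'a set" where
  "DC C \<phi> = {z. z \<in> edom \<phi> \<and> (\<exists>\<xi> \<in> subdiff \<phi> z. norm \<xi> \<le> C)}"

text \<open>zeta is a solution in W^{1,1}_loc(0,\<infinity>)^d with (weak) derivative zeta' of
  alpha zeta_t + \<partial>phi(zeta) \<ni> g a.e., zeta(0) = zeta0.\<close>
definition is_solution ::
  "('a::euclidean_space \<Rightarrow> ereal) \<Rightarrow> (real \<Rightarrow> real) \<Rightarrow> (real \<Rightarrow> 'a) \<Rightarrow> 'a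
     \<Rightarrow> (real \<Rightarrow> 'a) \<Rightarrow> (real \<Rightarrow> 'a) \<Rightarrow> bool" where
  "is_solution \<phi> \<alpha> g \<zeta>0 \<zeta> \<zeta>' \<longleftrightarrow>
     (\<forall>T>0. \<zeta>' absolutely_integrable_on {0..T}) \<and>
     (\<forall>t\<ge>0. \<zeta> t = \<zeta>0 + integral {0..t} \<zeta>') \<and>
     (AE t in lebesgue. t > 0 \<longrightarrow> g t - \<alpha> t *\<^sub>R \<zeta>' t \<in> subdiff \<phi> (\<zeta> t))"

definition property_X :: "('a::euclidean_space \<Rightarrow> ereal) \<Rightarrow> real \<Rightarrow> bool" where
  "property_X \<phi> D \<longleftrightarrow>
    (\<forall>C>0. \<forall>\<zeta>0 \<in> DC C \<phi>. \<forall>\<alpha> :: real \<Rightarrow> real. \<forall>g :: real \<Rightarrow> 'a.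
       set_borel_measurable lebesgue {0<..} \<alpha> \<longrightarrow>
       (\<forall>T>0. \<exists>B. AE t in lebesgue. t \<in> {0<..<T} \<longrightarrow> \<bar>\<alpha> t\<bar> \<le> B) \<longrightarrow>
       (\<exists>\<alpha>0>0. AE t in lebesgue. t > 0 \<longrightarrow> \<alpha>0 \<le> \<alpha> t) \<longrightarrow>
       set_borel_measurable lebesgue {0<..} g \<longrightarrow>
       (AE t in lebesgue. t > 0 \<longrightarrow> norm (g t) \<le> C) \<longrightarrow>
       (\<forall>\<zeta> \<zeta>'. is_solution \<phi> \<alpha> g \<zeta>0 \<zeta> \<zeta>' \<longrightarrow>
          (AE t in lebesgue. t > 0 \<longrightarrow> norm (g t - \<alpha> t *\<^sub>R \<zeta>' t) \<le> D * C)))"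

end

theory Submission
  imports Defs
begin

(* For a subgradient \<xi> of \<phi> at x, convexity of f and of the gauge M_K give
   (a) r |\<xi>| \<le> f'(M_K x)   and   (b) f'(M_K x) \<le> R |\<xi>|.
   By (a) it suffices to show f'(M_K \<zeta>(t)) \<le> R C along the trajectory, and by (b) this
   holds at the initial datum.  If f' exceeds R C somewhere, let \<mu> be the last level
   below which f' \<le> R C; the sublevel set S = {M_K \<le> \<mu>} is closed and convex, and on
   the part of the trajectory outside S the inclusion \<alpha> \<zeta>' = g - \<xi> with |g| \<le> C
   forces \<zeta>' to point into S.  A general invariance principle for absolutely
   continuous curves then keeps \<zeta> inside S, which gives the bound. *)

section \<open>The gauge of a convex body\<close>

locale convex_body =
  fixes K :: "'a::euclidean_space set" and r R :: real
  assumes convex_K: "convex K" and r_pos: "0 < r"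
    and inner_ball: "ball 0 r \<subseteq> K" and outer_ball: "K \<subseteq> cball 0 R"
begin

text \<open>The outer radius is positive because K contains a small ball.\<close>
lemma R_pos: "0 < R"
proof -
  obtain b :: 'a where b: "b \<in> Basis" using nonempty_Basis by blast
  have "(r/2) *\<^sub>R b \<in> K" using inner_ball r_pos b by auto
  hence "norm ((r/2) *\<^sub>R b) \<le> R" using outer_ball by auto
  thus ?thesis using r_pos b by simp
qed

lemma admissible_if_large:
  assumes "norm x / r < s" shows "0 < s" and "(1/s) *\<^sub>R x \<in> K"
proof -
  show s0: "0 < s" using assms r_pos by (smt (verit) divide_nonneg_pos norm_ge_zero)
  have "norm x < s * r" using assms r_pos by (simp add: pos_divide_less_eq mult.commute)
  hence "norm ((1/s) *\<^sub>R x) < r" using s0 by (simp add: divide_simps mult.commute)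
  thus "(1/s) *\<^sub>R x \<in> K" using inner_ball by auto
qed

lemma norm_le_if_admissible:
  assumes "0 < s" "(1/s) *\<^sub>R x \<in> K" shows "norm x \<le> s * R"
proof -
  have "norm ((1/s) *\<^sub>R x) \<le> R" using assms outer_ball by auto
  thus ?thesis using assms by (simp add: divide_simps mult.commute)
qed

lemma admissible_nonempty: "{s. 0 < s \<and> (1/s) *\<^sub>R x \<in> K} \<noteq> {}"
  using admissible_if_large[of x "norm x / r + 1"] by auto

lemma minkowski_nonneg: "0 \<le> minkowski K x"
  unfolding minkowski_def by (rule cInf_greatest[OF admissible_nonempty]) auto

lemma minkowski_le: "0 < s \<Longrightarrow> (1/s) *\<^sub>R x \<in> K \<Longrightarrow> minkowski K x \<le> s"
  unfolding minkowski_def by (rule cInf_lower) (auto intro: bdd_belowI[of _ 0])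

lemma minkowski_le_norm: "minkowski K x \<le> norm x / r"
proof (rule field_le_epsilon)
  fix e :: real assume "0 < e"
  thus "minkowski K x \<le> norm x / r + e"
    using admissible_if_large[of x "norm x / r + e"] minkowski_le by auto
qed

lemma norm_le_minkowski: "norm x \<le> R * minkowski K x"
proof -
  have "norm x / R \<le> minkowski K x"
    unfolding minkowski_def
    by (rule cInf_greatest[OF admissible_nonempty])
       (use norm_le_if_admissible R_pos in \<open>auto simp: divide_simps mult.commute\<close>)
  thus ?thesis using R_pos by (simp add: divide_simps mult.commute)
qed

lemma minkowski_zero: "minkowski K 0 = 0"
  using minkowski_le_norm[of 0] minkowski_nonneg[of 0] by simp

lemma minkowski_subadditive: "minkowski K (a + b) \<le> minkowski K a + minkowski K b"
proof -
  have sum: "minkowski K (a + b) \<le> s + t"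
    if s: "0 < s" "(1/s) *\<^sub>R a \<in> K" and t: "0 < t" "(1/t) *\<^sub>R b \<in> K" for s t
  proof -
    have "(s/(s+t)) *\<^sub>R ((1/s) *\<^sub>R a) + (1 - s/(s+t)) *\<^sub>R ((1/t) *\<^sub>R b) \<in> K"
      using convex_K s t by (intro convexD) (auto simp: divide_simps)
    moreover have "(s/(s+t)) *\<^sub>R ((1/s) *\<^sub>R a) + (1 - s/(s+t)) *\<^sub>R ((1/t) *\<^sub>R b)
                     = (1/(s+t)) *\<^sub>R (a + b)"
      using s t by (simp add: divide_simps scaleR_add_right)
    ultimately show ?thesis using minkowski_le[of "s+t" "a+b"] s t by simp
  qed
  have "minkowski K (a + b) - t \<le> minkowski K a" if "0 < t" "(1/t) *\<^sub>R b \<in> K" for t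
    unfolding minkowski_def[of K a]
    by (rule cInf_greatest[OF admissible_nonempty]) (use sum that in force)
  hence "minkowski K (a + b) - minkowski K a \<le> minkowski K b"
    unfolding minkowski_def[of K b]
    by (intro cInf_greatest[OF admissible_nonempty]) (smt (verit) mem_Collect_eq)
  thus ?thesis by simp
qed

lemma minkowski_scale_le:
  assumes "0 \<le> c" shows "minkowski K (c *\<^sub>R x) \<le> c * minkowski K x"
proof (cases "c = 0")
  case True thus ?thesis using minkowski_zero by simp
next
  case False
  hence c: "0 < c" using assms by simp
  have "minkowski K (c *\<^sub>R x) / c \<le> s" if s: "0 < s" "(1/s) *\<^sub>R x \<in> K" for s
  proof -
    have "(1 / (c * s)) *\<^sub>R (c *\<^sub>R x) = (1/s) *\<^sub>R x" using c s by simp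
    hence "minkowski K (c *\<^sub>R x) \<le> c * s" using minkowski_le[of "c * s"] c s by simp
    thus ?thesis using c by (simp add: divide_simps mult.commute)
  qed
  hence "minkowski K (c *\<^sub>R x) / c \<le> minkowski K x"
    unfolding minkowski_def[of K x] by (intro cInf_greatest[OF admissible_nonempty]) auto
  thus ?thesis using c by (simp add: divide_simps mult.commute)
qed

lemma minkowski_convex: "convex_on UNIV (minkowski K)"
proof (rule convex_onI)
  fix t :: real and a b :: 'a assume t: "0 < t" "t < 1"
  show "minkowski K ((1 - t) *\<^sub>R a + t *\<^sub>R b) \<le> (1 - t) * minkowski K a + t * minkowski K b"
    using minkowski_subadditive[of "(1-t) *\<^sub>R a" "t *\<^sub>R b"]
      minkowski_scale_le[of "1-t" a] minkowski_scale_le[of t b] t by linarith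
qed simp

lemma minkowski_lipschitz: "\<bar>minkowski K a - minkowski K b\<bar> \<le> norm (a - b) / r"
  using minkowski_subadditive[of b "a - b"] minkowski_le_norm[of "a - b"]
    minkowski_subadditive[of a "b - a"] minkowski_le_norm[of "b - a"]
  by (simp add: norm_minus_commute)

lemma minkowski_continuous: "continuous_on UNIV (minkowski K)"
proof (rule lipschitz_on_continuous_on)
  show "(1/r)-lipschitz_on UNIV (minkowski K)"
    using minkowski_lipschitz by (intro lipschitz_onI) (use r_pos in \<open>auto simp: dist_norm dist_real_def\<close>)
qed

lemma minkowski_sublevel: "closed {y. minkowski K y \<le> \<mu>}" "convex {y. minkowski K y \<le> \<mu>}"
proof -
  show "closed {y. minkowski K y \<le> \<mu>}"
    by (rule closed_Collect_le[OF minkowski_continuous continuous_on_const])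
  show "convex {y. minkowski K y \<le> \<mu>}"
  proof (rule convexI)
    fix x y :: 'a and u v :: real
    assume xy: "x \<in> {y. minkowski K y \<le> \<mu>}" "y \<in> {y. minkowski K y \<le> \<mu>}"
      and uv: "0 \<le> u" "0 \<le> v" "u + v = 1"
    have u: "u = 1 - v" using uv by simp
    have "minkowski K (u *\<^sub>R x + v *\<^sub>R y) \<le> u * minkowski K x + v * minkowski K y"
      unfolding u using convex_onD[OF minkowski_convex, of v x y] uv by simp
    also have "\<dots> \<le> u * \<mu> + v * \<mu>" using xy uv by (intro add_mono mult_left_mono) auto
    finally show "u *\<^sub>R x + v *\<^sub>R y \<in> {y. minkowski K y \<le> \<mu>}"
      using uv by (simp add: distrib_right[symmetric])
  qed
qed

end

section \<open>Convex C^1 profiles\<close>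

abbreviation profile_domain :: "ereal \<Rightarrow> real set" where
  "profile_domain f0 \<equiv> {x. 0 \<le> x \<and> ereal x < f0}"

lemma profile_domain_down_closed:
  "0 \<le> x \<Longrightarrow> x \<le> y \<Longrightarrow> y \<in> profile_domain f0 \<Longrightarrow> x \<in> profile_domain f0"
  by (auto intro: order.strict_trans1[where b = "ereal y"])

lemma profile_domain_convex: "convex (profile_domain f0)"
  unfolding is_interval_convex_1[symmetric] is_interval_1
proof (intro ballI allI impI)
  fix a b x assume "a \<in> profile_domain f0" "b \<in> profile_domain f0" "a \<le> x \<and> x \<le> b"
  thus "x \<in> profile_domain f0" by (intro profile_domain_down_closed[of x b]) auto
qed

lemma profile_domain_open_right:
  assumes "x \<in> profile_domain f0" obtains e where "0 < e" "x + e \<in> profile_domain f0"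
proof (cases f0)
  case (real F)
  thus ?thesis using assms that[of "(F - x)/2"] by (auto simp: field_simps)
qed (use assms that[of 1] in auto)

lemma difference_quotient_tendsto:
  fixes f :: "real \<Rightarrow> real"
  assumes A: "convex A" and c: "c \<in> A" "c + e \<in> A"
    and deriv: "(f has_real_derivative f') (at c within A)"
  shows "((\<lambda>s. (f (c + s * e) - f c) / s) \<longlongrightarrow> e * f') (at_right 0)"
proof (cases "e = 0")
  case True thus ?thesis by simp
next
  case False
  have "((\<lambda>y. (f y - f c) / (y - c)) \<longlongrightarrow> f') (at c within A)"
    using deriv by (simp add: has_field_derivative_iff)
  moreover have "filterlim (\<lambda>s. c + s * e) (at c within A) (at_right 0)"
    unfolding filterlim_at
  proof
    have "eventually (\<lambda>s. s \<in> {0<..<1}) (at_right (0::real))"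
      by (rule eventually_at_right_real) simp
    thus "\<forall>\<^sub>F s in at_right 0. c + s * e \<in> A \<and> c + s * e \<noteq> c"
    proof (rule eventually_mono)
      fix s :: real assume s: "s \<in> {0<..<1}"
      have "(1 - s) *\<^sub>R c + s *\<^sub>R (c + e) \<in> A" using A c s by (intro convexD) auto
      thus "c + s * e \<in> A \<and> c + s * e \<noteq> c" using s False by (simp add: algebra_simps)
    qed
    show "((\<lambda>s. c + s * e) \<longlongrightarrow> c) (at_right 0)" by (auto intro!: tendsto_eq_intros)
  qed
  ultimately have "((\<lambda>s. (f (c + s * e) - f c) / (c + s * e - c)) \<longlongrightarrow> f') (at_right 0)"
    by (rule filterlim_compose[of _ _ "at c within A"])
  hence "((\<lambda>s. e * ((f (c + s * e) - f c) / (c + s * e - c))) \<longlongrightarrow> e * f') (at_right 0)"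
    by (rule tendsto_mult_left)
  moreover have "\<forall>\<^sub>F s in at_right 0.
      e * ((f (c + s * e) - f c) / (c + s * e - c)) = (f (c + s * e) - f c) / s"
    by (rule eventually_mono[OF eventually_at_right_real[of 0 "1::real"]]) (use False in auto)
  ultimately show ?thesis by (rule Lim_transform_eventually)
qed

text \<open>Tangent inequality for a convex function with a one-sided derivative; unlike
  the library's convex_on_imp_above_tangent it also applies at boundary points.\<close>
lemma convex_on_above_tangent_within:
  fixes f :: "real \<Rightarrow> real"
  assumes f: "convex_on A f" and A: "convex A" and c: "c \<in> A" and x: "x \<in> A"
    and deriv: "(f has_real_derivative f') (at c within A)"
  shows "(x - c) * f' \<le> f x - f c"
proof -
  have lim: "((\<lambda>s. (f (c + s * (x - c)) - f c) / s) \<longlongrightarrow> (x - c) * f') (at_right 0)"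
    by (rule difference_quotient_tendsto[OF A c]) (use x deriv in auto)
  have "\<forall>\<^sub>F s in at_right 0. (f (c + s * (x - c)) - f c) / s \<le> f x - f c"
  proof (rule eventually_mono[OF eventually_at_right_real[of 0 "1::real"]])
    fix s :: real assume s: "s \<in> {0<..<1}"
    have "f ((1 - s) *\<^sub>R c + s *\<^sub>R x) \<le> (1 - s) * f c + s * f x"
      using s c x by (intro convex_onD[OF f]) auto
    thus "(f (c + s * (x - c)) - f c) / s \<le> f x - f c"
      using s by (simp add: algebra_simps divide_simps)
  qed simp
  thus ?thesis by (rule tendsto_upperbound[OF lim _ trivial_limit_at_right_real])
qed

lemma last_level_below:
  fixes h :: "real \<Rightarrow> real"
  assumes cont: "continuous_on {0..b} h" and b: "0 \<le> b" and low: "h 0 \<le> c" and high: "c < h b"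
  obtains \<mu> where "0 \<le> \<mu>" "\<mu> < b" "h \<mu> \<le> c" "\<And>m. \<mu> < m \<Longrightarrow> m \<le> b \<Longrightarrow> c < h m"
proof -
  define A where "A = {0..b} \<inter> h -` {..c}"
  have "closed A" unfolding A_def by (rule continuous_closed_preimage[OF cont]) auto
  moreover have "0 \<in> A" using b low by (simp add: A_def)
  moreover have bdd: "bdd_above A" by (rule bdd_aboveI[of _ b]) (auto simp: A_def)
  ultimately have "Sup A \<in> A" using closed_contains_Sup by blast
  hence "0 \<le> Sup A" "Sup A \<le> b" "h (Sup A) \<le> c" by (auto simp: A_def)
  moreover have "c < h m" if "Sup A < m" "m \<le> b" for m
  proof (rule ccontr)
    assume "\<not> c < h m"
    hence "m \<in> A" using that \<open>0 \<le> Sup A\<close> by (auto simp: A_def)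
    thus False using cSup_upper[OF _ bdd] that by fastforce
  qed
  ultimately show ?thesis using high that[of "Sup A"] by fastforce
qed

locale convex_profile =
  fixes f f' :: "real \<Rightarrow> real" and f0 :: ereal
  assumes f0_pos: "0 < f0"
    and mono_f: "mono_on (profile_domain f0) f"
    and convex_f: "convex_on (profile_domain f0) f"
    and deriv_f: "\<And>x. x \<in> profile_domain f0 \<Longrightarrow>
                   (f has_real_derivative f' x) (at x within profile_domain f0)"
    and continuous_f': "continuous_on (profile_domain f0) f'"
    and f'_zero: "f' 0 = 0"
begin

lemma f'_mono:
  assumes "0 \<le> a" "a \<le> b" "b \<in> profile_domain f0" shows "f' a \<le> f' b"
proof (cases "a = b")
  case False
  have a: "a \<in> profile_domain f0" using assms by (rule profile_domain_down_closed)
  have "(b - a) * f' a \<le> f b - f a" "(a - b) * f' b \<le> f a - f b"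
    using convex_on_above_tangent_within[OF convex_f profile_domain_convex _ _ deriv_f]
      a assms(3) by simp_all
  hence "(b - a) * f' a \<le> (b - a) * f' b" by (simp add: algebra_simps)
  thus ?thesis using False assms by simp
qed simp

lemma f'_nonneg: "a \<in> profile_domain f0 \<Longrightarrow> 0 \<le> f' a"
  using f'_mono[of 0 a] f'_zero by simp

lemma slope_threshold:
  assumes m1: "m1 \<in> profile_domain f0" "c < f' m1" and c: "0 \<le> c"
  obtains \<mu> where "0 \<le> \<mu>" "\<And>m. 0 \<le> m \<Longrightarrow> m \<le> \<mu> \<Longrightarrow> f' m \<le> c"
    "\<And>m. m \<in> profile_domain f0 \<Longrightarrow> \<mu> < m \<Longrightarrow> c < f' m"
proof -
  have "{0..m1} \<subseteq> profile_domain f0" using m1 profile_domain_down_closed by auto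
  hence "continuous_on {0..m1} f'" by (rule continuous_on_subset[OF continuous_f'])
  then obtain \<mu> where \<mu>: "0 \<le> \<mu>" "\<mu> < m1" "f' \<mu> \<le> c"
    and above: "\<And>m. \<mu> < m \<Longrightarrow> m \<le> m1 \<Longrightarrow> c < f' m"
    using last_level_below[of m1 f' c] m1 c f'_zero by auto
  show ?thesis
  proof (rule that[OF \<mu>(1)])
    show "f' m \<le> c" if "0 \<le> m" "m \<le> \<mu>" for m
      using f'_mono[OF that] \<mu> m1 profile_domain_down_closed[of \<mu> m1] by fastforce
    show "c < f' m" if "m \<in> profile_domain f0" "\<mu> < m" for m
    proof (cases "m \<le> m1")
      case True thus ?thesis using above that by blast
    next
      case False thus ?thesis using f'_mono[of m1 m] m1 that by auto
    qed
  qed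
qed

end

section \<open>Subgradients of the composite energy f \<circ> M_K\<close>

locale gauge_energy = convex_body K r R + convex_profile f f' f0
  for K :: "'a::euclidean_space set" and r R :: real and f f' :: "real \<Rightarrow> real" and f0 :: ereal
begin

abbreviation energy :: "'a \<Rightarrow> ereal" where "energy \<equiv> phi_of f f0 K"

lemma energy_eq: "minkowski K x \<in> profile_domain f0 \<Longrightarrow> energy x = ereal (f (minkowski K x))"
  by (simp add: phi_of_def)

lemma subdiff_domain: "\<xi> \<in> subdiff energy x \<Longrightarrow> minkowski K x \<in> profile_domain f0"
  using minkowski_nonneg[of x] by (auto simp: subdiff_def phi_of_def split: if_splits)

lemma subgradient_gauge_inequality:
  assumes \<xi>: "\<xi> \<in> subdiff energy x" and z: "minkowski K z \<in> profile_domain f0"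
  shows "\<xi> \<bullet> (z - x) \<le> f' (minkowski K x) * (minkowski K z - minkowski K x)"
proof -
  let ?m = "minkowski K x" and ?e = "minkowski K z - minkowski K x"
  have x: "?m \<in> profile_domain f0" using \<xi> by (rule subdiff_domain)
  have ev: "\<forall>\<^sub>F s in at_right 0. \<xi> \<bullet> (z - x) \<le> (f (?m + s * ?e) - f ?m) / s"
  proof (rule eventually_mono[OF eventually_at_right_real[of 0 "1::real"]])
    fix s :: real assume s: "s \<in> {0<..<1}"
    let ?zs = "(1 - s) *\<^sub>R x + s *\<^sub>R z"
    have gauge_zs: "minkowski K ?zs \<le> ?m + s * ?e"
      using convex_onD[OF minkowski_convex, of s x z] s by (simp add: algebra_simps)
    have "(1 - s) *\<^sub>R ?m + s *\<^sub>R minkowski K z \<in> profile_domain f0"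
      using s x z by (intro convexD_alt[OF profile_domain_convex]) auto
    hence mid: "?m + s * ?e \<in> profile_domain f0" by (simp add: algebra_simps)
    have zs: "minkowski K ?zs \<in> profile_domain f0"
      using profile_domain_down_closed[OF minkowski_nonneg gauge_zs mid] .
    have "energy x + ereal (\<xi> \<bullet> (?zs - x)) \<le> energy ?zs"
      using \<xi> by (auto simp: subdiff_def)
    hence "f ?m + s * (\<xi> \<bullet> (z - x)) \<le> f (minkowski K ?zs)"
      using energy_eq[OF x] energy_eq[OF zs] by (simp add: algebra_simps)
    also have "\<dots> \<le> f (?m + s * ?e)"
      using gauge_zs zs mid by (intro mono_onD[OF mono_f])
    finally show "\<xi> \<bullet> (z - x) \<le> (f (?m + s * ?e) - f ?m) / s"
      using s by (simp add: divide_simps mult.commute)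
  qed simp
  have lim: "((\<lambda>s. (f (?m + s * ?e) - f ?m) / s) \<longlongrightarrow> ?e * f' ?m) (at_right 0)"
    by (rule difference_quotient_tendsto[OF profile_domain_convex]) (use x z deriv_f[OF x] in auto)
  have "\<xi> \<bullet> (z - x) \<le> ?e * f' ?m"
    by (rule tendsto_lowerbound[OF lim ev trivial_limit_at_right_real])
  thus ?thesis by (simp add: mult.commute)
qed

text \<open>Estimate (a): r |\<xi>| \<le> f'(M_K x), obtained by testing in the direction of \<xi>.\<close>
lemma subgradient_norm_le:
  assumes \<xi>: "\<xi> \<in> subdiff energy x" shows "norm \<xi> \<le> f' (minkowski K x) / r"
proof (cases "\<xi> = 0")
  case True thus ?thesis using f'_nonneg[OF subdiff_domain[OF \<xi>]] r_pos by simp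
next
  case False
  have x: "minkowski K x \<in> profile_domain f0" using \<xi> by (rule subdiff_domain)
  obtain e where e: "0 < e" "minkowski K x + e \<in> profile_domain f0"
    using profile_domain_open_right[OF x] by blast
  define z where "z = x + (e * r / norm \<xi>) *\<^sub>R \<xi>"
  have "minkowski K z \<le> minkowski K x + norm ((e * r / norm \<xi>) *\<^sub>R \<xi>) / r"
    using minkowski_subadditive minkowski_le_norm unfolding z_def by (meson add_left_mono order_trans)
  also have "norm ((e * r / norm \<xi>) *\<^sub>R \<xi>) / r = e" using e r_pos False by simp
  finally have z_le: "minkowski K z \<le> minkowski K x + e" .
  have z: "minkowski K z \<in> profile_domain f0"
    using profile_domain_down_closed[OF minkowski_nonneg z_le e(2)] .
  have "e * r * norm \<xi> = \<xi> \<bullet> (z - x)"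
    using False by (simp add: z_def dot_square_norm power2_eq_square)
  also have "\<dots> \<le> f' (minkowski K x) * (minkowski K z - minkowski K x)"
    by (rule subgradient_gauge_inequality[OF \<xi> z])
  also have "\<dots> \<le> f' (minkowski K x) * e"
    using z_le f'_nonneg[OF x] by (intro mult_left_mono) auto
  finally show ?thesis using e r_pos by (simp add: divide_simps mult.commute mult.left_commute)
qed

text \<open>Estimate (b): f'(M_K x) \<le> R |\<xi>|, obtained by testing at the origin.\<close>
lemma slope_le_subgradient_norm:
  assumes \<xi>: "\<xi> \<in> subdiff energy x" shows "f' (minkowski K x) \<le> R * norm \<xi>"
proof (cases "minkowski K x = 0")
  case True thus ?thesis using f'_zero R_pos by simp
next
  case False
  have "minkowski K 0 \<in> profile_domain f0"
    using f0_pos minkowski_zero by (simp add: zero_ereal_def)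
  hence "\<xi> \<bullet> (0 - x) \<le> f' (minkowski K x) * (minkowski K 0 - minkowski K x)"
    by (rule subgradient_gauge_inequality[OF \<xi>])
  hence "minkowski K x * f' (minkowski K x) \<le> \<xi> \<bullet> x"
    by (simp add: minkowski_zero algebra_simps)
  also have "\<dots> \<le> norm \<xi> * norm x" by (rule norm_cauchy_schwarz)
  also have "\<dots> \<le> norm \<xi> * (R * minkowski K x)"
    by (intro mult_left_mono norm_le_minkowski) simp
  finally show ?thesis
    using False minkowski_nonneg[of x] by (simp add: algebra_simps mult_le_cancel_left)
qed

lemma subgradient_away_from_sublevel:
  fixes \<mu> C :: real
  defines "S \<equiv> {y. minkowski K y \<le> \<mu>}"
  assumes \<xi>: "\<xi> \<in> subdiff energy x" and \<mu>: "0 \<le> \<mu>" "\<mu> < minkowski K x"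
    and slope: "R * C \<le> f' (minkowski K x)" and C: "0 \<le> C"
  shows "C * norm (x - closest_point S x) \<le> \<xi> \<bullet> (x - closest_point S x)"
proof -
  let ?m = "minkowski K x"
  have closed_S: "closed S" unfolding S_def by (rule minkowski_sublevel)
  have "0 \<in> S" using minkowski_zero \<mu> by (simp add: S_def)
  define y where "y = closest_point S x"
  have y: "minkowski K y \<le> \<mu>"
    using closest_point_in_set[OF closed_S] \<open>0 \<in> S\<close> by (auto simp: y_def S_def)
  have x: "?m \<in> profile_domain f0" using \<xi> by (rule subdiff_domain)
  have "minkowski K y \<in> profile_domain f0"
    using y \<mu> by (intro profile_domain_down_closed[OF minkowski_nonneg _ x]) simp
  hence "\<xi> \<bullet> (y - x) \<le> f' ?m * (minkowski K y - ?m)"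
    by (rule subgradient_gauge_inequality[OF \<xi>])
  also have "\<dots> \<le> f' ?m * (\<mu> - ?m)" using y f'_nonneg[OF x] by (intro mult_left_mono) auto
  finally have toward: "f' ?m * (?m - \<mu>) \<le> \<xi> \<bullet> (x - y)"
    by (simp add: inner_diff_right algebra_simps)
  text \<open>The radial contraction of x onto the level \<mu> lies in S.\<close>
  define z where "z = (\<mu> / ?m) *\<^sub>R x"
  have "minkowski K z \<le> (\<mu> / ?m) * ?m" unfolding z_def using \<mu> by (intro minkowski_scale_le) simp
  hence "z \<in> S" using \<mu> by (simp add: S_def)
  hence "norm (x - y) \<le> norm (x - z)"
    using closest_point_le[OF closed_S] by (simp add: y_def dist_norm)
  also have "x - z = (1 - \<mu> / ?m) *\<^sub>R x" by (simp add: z_def algebra_simps)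
  also have "norm \<dots> = (1 - \<mu> / ?m) * norm x" using \<mu> by simp
  also have "\<dots> \<le> (1 - \<mu> / ?m) * (R * ?m)"
    using \<mu> norm_le_minkowski[of x] by (intro mult_left_mono) auto
  also have "\<dots> = R * (?m - \<mu>)" using \<mu> by (simp add: divide_simps algebra_simps)
  finally have dist: "norm (x - y) \<le> R * (?m - \<mu>)" .
  have "C * norm (x - y) \<le> C * (R * (?m - \<mu>))" using dist C by (rule mult_left_mono)
  also have "\<dots> = (R * C) * (?m - \<mu>)" by simp
  also have "\<dots> \<le> f' ?m * (?m - \<mu>)" using slope \<mu> by (intro mult_right_mono) auto
  finally show ?thesis using toward by (simp add: y_def)
qed

end

section \<open>An invariance principle for closed convex sets\<close>

text \<open>The residual x - P_S x of the metric projection onto a closed convex set is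
  2-Lipschitz, since the projection itself is 1-Lipschitz.\<close>
lemma residual_lipschitz:
  assumes "closed S" "convex S" "S \<noteq> {}"
  shows "norm ((a - closest_point S a) - (b - closest_point S b)) \<le> 2 * norm (a - b)"
proof -
  have "(a - closest_point S a) - (b - closest_point S b)
          = (a - b) - (closest_point S a - closest_point S b)" by (simp add: algebra_simps)
  hence "norm ((a - closest_point S a) - (b - closest_point S b))
          \<le> norm (a - b) + norm (closest_point S a - closest_point S b)"
    using norm_triangle_ineq4 by metis
  also have "norm (closest_point S a - closest_point S b) \<le> norm (a - b)"
    using closest_point_lipschitz[OF assms(2,1,3)] by (simp add: dist_norm)
  finally show ?thesis by simp
qed

text \<open>First-order upper expansion of the squared distance to a closed set, obtained
  by comparing with the old projection point.\<close>
lemma residual_sq_le: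
  assumes "closed S" "S \<noteq> {}"
  shows "(norm (b - closest_point S b))\<^sup>2 \<le> (norm (a - closest_point S a))\<^sup>2
           + 2 * ((a - closest_point S a) \<bullet> (b - a)) + (norm (b - a))\<^sup>2"
proof -
  have "dist b (closest_point S b) \<le> dist b (closest_point S a)"
    using closest_point_le[OF assms(1) closest_point_in_set[OF assms]] .
  hence "norm (b - closest_point S b) \<le> norm ((a - closest_point S a) + (b - a))"
    by (simp add: dist_norm algebra_simps)
  hence "(norm (b - closest_point S b))\<^sup>2 \<le> (norm ((a - closest_point S a) + (b - a)))\<^sup>2"
    by (simp add: power_mono)
  thus ?thesis
    by (simp add: power2_norm_eq_inner inner_add inner_commute algebra_simps)
qed

lemma inner_integral_le_ae:
  fixes h :: "real \<Rightarrow> 'a::euclidean_space"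
  assumes h: "h absolutely_integrable_on {s..u}"
    and ae: "AE \<tau> in lebesgue. \<tau> \<in> {s..u} \<longrightarrow> v \<bullet> h \<tau> \<le> c * norm (h \<tau>)"
  shows "v \<bullet> integral {s..u} h \<le> c * integral {s..u} (\<lambda>\<tau>. norm (h \<tau>))"
proof -
  obtain N where N: "negligible N" "{\<tau>. \<not> (\<tau> \<in> {s..u} \<longrightarrow> v \<bullet> h \<tau> \<le> c * norm (h \<tau>))} \<subseteq> N"
    using ae unfolding eventually_ae_filter_negligible by blast
  have hi: "h integrable_on {s..u}" and ni: "(\<lambda>\<tau>. norm (h \<tau>)) integrable_on {s..u}"
    using h by (simp_all add: absolutely_integrable_on_def)
  have vi: "(\<lambda>\<tau>. v \<bullet> h \<tau>) integrable_on {s..u}"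
    using integrable_linear[OF hi bounded_linear_inner_right] by (simp add: o_def)
  define k where "k \<tau> = (if \<tau> \<in> N then c * norm (h \<tau>) else v \<bullet> h \<tau>)" for \<tau>
  have "v \<bullet> integral {s..u} h = integral {s..u} (\<lambda>\<tau>. v \<bullet> h \<tau>)"
    using integral_linear[OF hi bounded_linear_inner_right] by (simp add: o_def)
  also have "\<dots> = integral {s..u} k" by (rule integral_spike[OF N(1)]) (auto simp: k_def)
  also have "\<dots> \<le> integral {s..u} (\<lambda>\<tau>. c * norm (h \<tau>))"
  proof (rule integral_le)
    show "k integrable_on {s..u}" by (rule integrable_spike[OF vi N(1)]) (auto simp: k_def)
    show "(\<lambda>\<tau>. c * norm (h \<tau>)) integrable_on {s..u}" using ni by (rule integrable_on_mult_right)
    show "k \<tau> \<le> c * norm (h \<tau>)" if "\<tau> \<in> {s..u}" for \<tau> using N(2) that by (auto simp: k_def)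
  qed
  finally show ?thesis by simp
qed

lemma continuation_by_small_steps:
  fixes \<delta> T u :: real
  assumes \<delta>: "0 < \<delta>" and start: "P 0"
    and step: "\<And>s u. 0 \<le> s \<Longrightarrow> s \<le> u \<Longrightarrow> u \<le> T \<Longrightarrow> u - s \<le> \<delta> \<Longrightarrow> P s \<Longrightarrow> P u"
    and u: "0 \<le> u" "u \<le> T"
  shows "P u"
proof -
  have "P v" if "0 \<le> v" "v \<le> T" "v \<le> real k * \<delta>" for k v
    using that
  proof (induction k arbitrary: v)
    case 0 thus ?case using start by simp
  next
    case (Suc k)
    show ?case
    proof (cases "v \<le> real k * \<delta>")
      case True thus ?thesis using Suc by blast
    next
      case False
      have "P (real k * \<delta>)" using Suc.IH[of "real k * \<delta>"] Suc.prems False \<delta> by simp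
      thus ?thesis
        using step[of "real k * \<delta>" v] Suc.prems False \<delta> by (simp add: distrib_right)
    qed
  qed
  moreover obtain k :: nat where "u / \<delta> \<le> real k" using real_nat_ceiling_ge by blast
  ultimately show ?thesis using u \<delta> by (simp add: divide_simps)
qed

lemma residual_sq_increment:
  fixes \<zeta> \<zeta>' :: "real \<Rightarrow> 'a::euclidean_space"
  assumes S: "closed S" "convex S" "S \<noteq> {}" and su: "s \<le> u"
    and integrable: "\<zeta>' absolutely_integrable_on {s..u}"
    and increment: "\<zeta> u - \<zeta> s = integral {s..u} \<zeta>'"
    and inward: "AE \<tau> in lebesgue. \<tau> \<in> {s..u} \<longrightarrow> (\<zeta> \<tau> - closest_point S (\<zeta> \<tau>)) \<bullet> \<zeta>' \<tau> \<le> 0"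
    and osc: "\<forall>\<tau>\<in>{s..u}. norm (\<zeta> \<tau> - \<zeta> s) \<le> \<eta>"
  shows "(norm (\<zeta> u - closest_point S (\<zeta> u)))\<^sup>2
           \<le> (norm (\<zeta> s - closest_point S (\<zeta> s)))\<^sup>2
             + 5 * \<eta> * integral {s..u} (\<lambda>\<tau>. norm (\<zeta>' \<tau>))"
proof -
  define w where "w \<tau> = \<zeta> \<tau> - closest_point S (\<zeta> \<tau>)" for \<tau>
  define L where "L = integral {s..u} (\<lambda>\<tau>. norm (\<zeta>' \<tau>))"
  have "norm (\<zeta> u - \<zeta> s) \<le> L"
    unfolding increment L_def
    by (rule integral_norm_bound_integral) (use integrable in \<open>auto simp: absolutely_integrable_on_def\<close>)
  moreover have "norm (\<zeta> u - \<zeta> s) \<le> \<eta>" using osc su by auto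
  ultimately have sq: "(norm (\<zeta> u - \<zeta> s))\<^sup>2 \<le> \<eta> * L"
    unfolding power2_eq_square by (intro mult_mono) (auto intro: order_trans[OF norm_ge_zero])
  have "w s \<bullet> (\<zeta> u - \<zeta> s) \<le> (2 * \<eta>) * L"
    unfolding increment L_def
  proof (rule inner_integral_le_ae[OF integrable])
    show "AE \<tau> in lebesgue. \<tau> \<in> {s..u} \<longrightarrow> w s \<bullet> \<zeta>' \<tau> \<le> 2 * \<eta> * norm (\<zeta>' \<tau>)"
      using inward
    proof eventually_elim
      case (elim \<tau>)
      show ?case
      proof
        assume \<tau>: "\<tau> \<in> {s..u}"
        have "norm (w s - w \<tau>) = norm (w \<tau> - w s)" by (rule norm_minus_commute)
        also have "\<dots> \<le> 2 * norm (\<zeta> \<tau> - \<zeta> s)" unfolding w_def by (rule residual_lipschitz[OF S])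
        also have "\<dots> \<le> 2 * \<eta>" using osc \<tau> by simp
        finally have "norm (w s - w \<tau>) \<le> 2 * \<eta>" .
        hence "(w s - w \<tau>) \<bullet> \<zeta>' \<tau> \<le> 2 * \<eta> * norm (\<zeta>' \<tau>)"
          using norm_cauchy_schwarz[of "w s - w \<tau>" "\<zeta>' \<tau>"]
          by (meson mult_right_mono norm_ge_zero order_trans)
        moreover have "w \<tau> \<bullet> \<zeta>' \<tau> \<le> 0" using elim \<tau> by (simp add: w_def)
        ultimately show "w s \<bullet> \<zeta>' \<tau> \<le> 2 * \<eta> * norm (\<zeta>' \<tau>)"
          by (simp add: inner_diff_left)
      qed
    qed
  qed
  thus ?thesis
    using residual_sq_le[OF S(1,3), of "\<zeta> u" "\<zeta> s"] sq by (simp add: w_def L_def)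
qed

lemma primitive_increment:
  fixes \<zeta> \<zeta>' :: "real \<Rightarrow> 'a::euclidean_space"
  assumes integrable: "\<forall>T>0. \<zeta>' absolutely_integrable_on {0..T}"
    and primitive: "\<forall>t\<ge>0. \<zeta> t = z0 + integral {0..t} \<zeta>'" and su: "0 \<le> s" "s \<le> u"
  shows "\<zeta>' absolutely_integrable_on {s..u}"
    and "\<zeta> u - \<zeta> s = integral {s..u} \<zeta>'"
    and "integral {0..u} (\<lambda>\<sigma>. norm (\<zeta>' \<sigma>)) - integral {0..s} (\<lambda>\<sigma>. norm (\<zeta>' \<sigma>))
           = integral {s..u} (\<lambda>\<sigma>. norm (\<zeta>' \<sigma>))"
proof -
  have "\<zeta>' absolutely_integrable_on {0..u + 1}" using integrable su by simp
  hence int_u: "\<zeta>' absolutely_integrable_on {0..u}"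
    by (rule absolutely_integrable_on_subinterval) auto
  show "\<zeta>' absolutely_integrable_on {s..u}"
    using absolutely_integrable_on_subinterval[OF int_u] su by auto
  have "\<zeta>' integrable_on {0..u}" "(\<lambda>\<sigma>. norm (\<zeta>' \<sigma>)) integrable_on {0..u}"
    using int_u by (auto simp: absolutely_integrable_on_def)
  hence "integral {0..s} \<zeta>' + integral {s..u} \<zeta>' = integral {0..u} \<zeta>'"
    "integral {0..s} (\<lambda>\<sigma>. norm (\<zeta>' \<sigma>)) + integral {s..u} (\<lambda>\<sigma>. norm (\<zeta>' \<sigma>))
       = integral {0..u} (\<lambda>\<sigma>. norm (\<zeta>' \<sigma>))"
    using su by (simp_all add: Henstock_Kurzweil_Integration.integral_combine)
  thus "\<zeta> u - \<zeta> s = integral {s..u} \<zeta>'"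
    "integral {0..u} (\<lambda>\<sigma>. norm (\<zeta>' \<sigma>)) - integral {0..s} (\<lambda>\<sigma>. norm (\<zeta>' \<sigma>))
       = integral {s..u} (\<lambda>\<sigma>. norm (\<zeta>' \<sigma>))"
    using primitive su by (auto simp: algebra_simps)
qed

lemma primitive_uniformly_continuous:
  fixes \<zeta> \<zeta>' :: "real \<Rightarrow> 'a::euclidean_space"
  assumes integrable: "\<forall>T>0. \<zeta>' absolutely_integrable_on {0..T}"
    and primitive: "\<forall>t\<ge>0. \<zeta> t = z0 + integral {0..t} \<zeta>'" and T: "0 < T"
  shows "uniformly_continuous_on {0..T} \<zeta>"
proof -
  have "continuous_on {0..T} (\<lambda>\<tau>. z0 + integral {0..\<tau>} \<zeta>')"
    using integrable T by (intro continuous_intros indefinite_integral_continuous_1)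
       (simp add: absolutely_integrable_on_def)
  hence "continuous_on {0..T} \<zeta>" by (rule continuous_on_eq) (use primitive in auto)
  thus ?thesis by (rule compact_uniformly_continuous) simp
qed

text \<open>Quantitative core of the invariance principle: the squared distance to S is at
  most \<epsilon> times the path length, for every \<epsilon> > 0.  The proof advances in steps on
  which the oscillation of \<zeta> is below \<epsilon>/5.\<close>
lemma residual_sq_le_path_length:
  fixes \<zeta> \<zeta>' :: "real \<Rightarrow> 'a::euclidean_space"
  assumes S: "closed S" "convex S"
    and integrable: "\<forall>T>0. \<zeta>' absolutely_integrable_on {0..T}"
    and primitive: "\<forall>t\<ge>0. \<zeta> t = z0 + integral {0..t} \<zeta>'"
    and start: "z0 \<in> S"
    and inward: "AE \<tau> in lebesgue. \<tau> > 0 \<longrightarrow> (\<zeta> \<tau> - closest_point S (\<zeta> \<tau>)) \<bullet> \<zeta>' \<tau> \<le> 0"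
    and t: "0 \<le> t" and \<epsilon>: "0 < \<epsilon>"
  shows "(norm (\<zeta> t - closest_point S (\<zeta> t)))\<^sup>2 \<le> \<epsilon> * integral {0..t} (\<lambda>\<sigma>. norm (\<zeta>' \<sigma>))"
proof -
  have S_ne: "S \<noteq> {}" using start by blast
  define dist2 where "dist2 \<tau> = (norm (\<zeta> \<tau> - closest_point S (\<zeta> \<tau>)))\<^sup>2" for \<tau>
  define len where "len \<tau> = integral {0..\<tau>} (\<lambda>\<sigma>. norm (\<zeta>' \<sigma>))" for \<tau>
  note increment = primitive_increment[OF integrable primitive]
  have inward_on: "AE \<tau> in lebesgue. \<tau> \<in> {s..u} \<longrightarrow>
      (\<zeta> \<tau> - closest_point S (\<zeta> \<tau>)) \<bullet> \<zeta>' \<tau> \<le> 0" if "0 \<le> s" for s u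
  proof -
    have "AE \<tau> in lebesgue. \<tau> \<noteq> 0"
      unfolding eventually_ae_filter_negligible by (intro exI[of _ "{0}"]) auto
    with inward show ?thesis by eventually_elim (use that in auto)
  qed
  have unif: "uniformly_continuous_on {0..t+1} \<zeta>"
    using t by (intro primitive_uniformly_continuous[OF integrable primitive]) simp
  have "0 < \<epsilon>/5" using \<epsilon> by simp
  from unif[unfolded uniformly_continuous_on_def, rule_format, OF this]
  obtain \<delta> where \<delta>: "0 < \<delta>"
    and osc: "\<forall>x\<in>{0..t+1}. \<forall>y\<in>{0..t+1}. dist y x < \<delta> \<longrightarrow> dist (\<zeta> y) (\<zeta> x) < \<epsilon>/5"
    by blast
  have "dist2 t \<le> \<epsilon> * len t"
  proof (rule continuation_by_small_steps[where P = "\<lambda>v. dist2 v \<le> \<epsilon> * len v" and \<delta> = "\<delta>/2"])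
    show "dist2 0 \<le> \<epsilon> * len 0"
      using primitive start by (simp add: dist2_def len_def closest_point_self)
    fix s u assume su: "0 \<le> s" "s \<le> u" "u \<le> t + 1" "u - s \<le> \<delta>/2"
      and prev: "dist2 s \<le> \<epsilon> * len s"
    have "norm (\<zeta> \<tau> - \<zeta> s) \<le> \<epsilon>/5" if \<tau>: "\<tau> \<in> {s..u}" for \<tau>
    proof -
      have "dist \<tau> s < \<delta>" using \<tau> su \<delta> by (simp add: dist_real_def)
      hence "dist (\<zeta> \<tau>) (\<zeta> s) < \<epsilon>/5" using osc \<tau> su by auto
      thus ?thesis by (simp add: dist_norm)
    qed
    hence "dist2 u \<le> dist2 s + 5 * (\<epsilon>/5) * integral {s..u} (\<lambda>\<sigma>. norm (\<zeta>' \<sigma>))"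
      unfolding dist2_def
      using residual_sq_increment[OF S S_ne su(2) increment(1,2)[OF su(1,2)] inward_on[OF su(1)]]
      by blast
    thus "dist2 u \<le> \<epsilon> * len u"
      using prev increment(3)[OF su(1,2)] by (simp add: len_def algebra_simps)
  qed (use \<delta> t in auto)
  thus ?thesis by (simp add: dist2_def len_def)
qed

lemma closed_convex_invariance:
  fixes \<zeta> \<zeta>' :: "real \<Rightarrow> 'a::euclidean_space"
  assumes S: "closed S" "convex S"
    and integrable: "\<forall>T>0. \<zeta>' absolutely_integrable_on {0..T}"
    and primitive: "\<forall>t\<ge>0. \<zeta> t = z0 + integral {0..t} \<zeta>'"
    and start: "z0 \<in> S"
    and inward: "AE \<tau> in lebesgue. \<tau> > 0 \<longrightarrow> (\<zeta> \<tau> - closest_point S (\<zeta> \<tau>)) \<bullet> \<zeta>' \<tau> \<le> 0"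
    and t: "0 \<le> t"
  shows "\<zeta> t \<in> S"
proof -
  define len where "len = integral {0..t} (\<lambda>\<sigma>. norm (\<zeta>' \<sigma>))"
  have len_nonneg: "0 \<le> len"
    using primitive_increment(1)[OF integrable primitive order_refl t] unfolding len_def
    by (intro integral_nonneg) (auto simp: absolutely_integrable_on_def)
  have "(norm (\<zeta> t - closest_point S (\<zeta> t)))\<^sup>2 \<le> 0 + e" if "0 < e" for e
  proof -
    have "0 < e / (len + 1)" using that len_nonneg by simp
    from residual_sq_le_path_length[OF S integrable primitive start inward t this]
    have "(norm (\<zeta> t - closest_point S (\<zeta> t)))\<^sup>2 \<le> e / (len + 1) * len"
      unfolding len_def .
    also have "\<dots> \<le> e" using that len_nonneg by (simp add: divide_simps)
    finally show ?thesis by simp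
  qed
  hence "(norm (\<zeta> t - closest_point S (\<zeta> t)))\<^sup>2 \<le> 0" by (rule field_le_epsilon)
  hence "\<zeta> t = closest_point S (\<zeta> t)" by simp
  moreover have "S \<noteq> {}" using start by blast
  ultimately show ?thesis using closest_point_in_set[OF S(1)] by metis
qed

context gauge_energy
begin

lemma velocity_inward:
  fixes \<mu> C a :: real
  defines "S \<equiv> {y. minkowski K y \<le> \<mu>}"
  assumes \<mu>: "0 \<le> \<mu>" and steep: "\<And>m. m \<in> profile_domain f0 \<Longrightarrow> \<mu> < m \<Longrightarrow> R * C < f' m"
    and \<xi>: "g - a *\<^sub>R v \<in> subdiff energy x" and a: "0 < a" and g: "norm g \<le> C"
  shows "(x - closest_point S x) \<bullet> v \<le> 0"
proof (cases "x \<in> S")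
  case True thus ?thesis by (simp add: closest_point_self)
next
  case False
  define n where "n = x - closest_point S x"
  have outside: "\<mu> < minkowski K x" using False by (simp add: S_def)
  have "R * C \<le> f' (minkowski K x)"
    using steep[OF subdiff_domain[OF \<xi>] outside] by simp
  hence "C * norm n \<le> (g - a *\<^sub>R v) \<bullet> n"
    using subgradient_away_from_sublevel[OF \<xi> \<mu> outside] g
    by (simp add: n_def S_def order_trans[OF norm_ge_zero g])
  moreover have "n \<bullet> g \<le> C * norm n"
    using norm_cauchy_schwarz[of n g] mult_left_mono[OF g norm_ge_zero[of n]]
    by (simp add: mult.commute)
  moreover have "a * (n \<bullet> v) = n \<bullet> g - (g - a *\<^sub>R v) \<bullet> n"
    by (simp add: inner_diff_right inner_commute)
  ultimately have "a * (n \<bullet> v) \<le> 0" by linarith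
  thus ?thesis using a by (simp add: n_def mult_le_0_iff)
qed

lemma trajectory_slope_bound:
  fixes \<alpha> :: "real \<Rightarrow> real" and g :: "real \<Rightarrow> 'a"
  assumes C: "0 \<le> C" and initial: "\<zeta>0 \<in> DC C energy"
    and g: "AE t in lebesgue. t > 0 \<longrightarrow> norm (g t) \<le> C"
    and \<alpha>: "AE t in lebesgue. t > 0 \<longrightarrow> \<alpha>0 \<le> \<alpha> t" and \<alpha>0: "0 < \<alpha>0"
    and sol: "is_solution energy \<alpha> g \<zeta>0 \<zeta> \<zeta>'"
    and t: "0 \<le> t" and dom: "minkowski K (\<zeta> t) \<in> profile_domain f0"
  shows "f' (minkowski K (\<zeta> t)) \<le> R * C"
proof (cases "\<forall>m \<in> profile_domain f0. f' m \<le> R * C")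
  case True thus ?thesis using dom by blast
next
  case False
  then obtain m1 where m1: "m1 \<in> profile_domain f0" "R * C < f' m1" by force
  have RC: "0 \<le> R * C" using C R_pos by simp
  obtain \<mu> where \<mu>: "0 \<le> \<mu>" and flat: "\<And>m. 0 \<le> m \<Longrightarrow> m \<le> \<mu> \<Longrightarrow> f' m \<le> R * C"
    and steep: "\<And>m. m \<in> profile_domain f0 \<Longrightarrow> \<mu> < m \<Longrightarrow> R * C < f' m"
    using slope_threshold[OF m1 RC] by blast
  define S where "S = {y. minkowski K y \<le> \<mu>}"
  obtain \<xi>0 where \<xi>0: "\<xi>0 \<in> subdiff energy \<zeta>0" "norm \<xi>0 \<le> C"
    using initial by (auto simp: DC_def)
  have "f' (minkowski K \<zeta>0) \<le> R * norm \<xi>0" by (rule slope_le_subgradient_norm[OF \<xi>0(1)])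
  also have "\<dots> \<le> R * C" using \<xi>0(2) R_pos by simp
  finally have "\<not> \<mu> < minkowski K \<zeta>0" using steep[OF subdiff_domain[OF \<xi>0(1)]] by linarith
  hence start: "\<zeta>0 \<in> S" by (simp add: S_def)
  have "AE \<tau> in lebesgue. \<tau> > 0 \<longrightarrow> g \<tau> - \<alpha> \<tau> *\<^sub>R \<zeta>' \<tau> \<in> subdiff energy (\<zeta> \<tau>)"
    using sol unfolding is_solution_def by blast
  hence inward: "AE \<tau> in lebesgue. \<tau> > 0 \<longrightarrow> (\<zeta> \<tau> - closest_point S (\<zeta> \<tau>)) \<bullet> \<zeta>' \<tau> \<le> 0"
    using g \<alpha>
  proof eventually_elim
    case (elim \<tau>)
    show ?case
    proof
      assume "0 < \<tau>"
      hence "g \<tau> - \<alpha> \<tau> *\<^sub>R \<zeta>' \<tau> \<in> subdiff energy (\<zeta> \<tau>)" "0 < \<alpha> \<tau>" "norm (g \<tau>) \<le> C"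
        using elim \<alpha>0 by auto
      thus "(\<zeta> \<tau> - closest_point S (\<zeta> \<tau>)) \<bullet> \<zeta>' \<tau> \<le> 0"
        unfolding S_def by (intro velocity_inward[OF \<mu>, of C]) (auto intro: steep)
    qed
  qed
  have "\<zeta> t \<in> S"
    using closed_convex_invariance[OF minkowski_sublevel[of \<mu>, folded S_def] _ _ start inward t]
      sol by (simp add: is_solution_def)
  thus ?thesis using flat[OF minkowski_nonneg] by (simp add: S_def)
qed

lemma solution_bound:
  fixes \<alpha> :: "real \<Rightarrow> real" and g :: "real \<Rightarrow> 'a"
  assumes C: "0 \<le> C" and initial: "\<zeta>0 \<in> DC C energy"
    and g: "AE t in lebesgue. t > 0 \<longrightarrow> norm (g t) \<le> C"
    and \<alpha>: "\<exists>\<alpha>0>0. AE t in lebesgue. t > 0 \<longrightarrow> \<alpha>0 \<le> \<alpha> t"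
    and sol: "is_solution energy \<alpha> g \<zeta>0 \<zeta> \<zeta>'"
  shows "AE t in lebesgue. t > 0 \<longrightarrow> norm (g t - \<alpha> t *\<^sub>R \<zeta>' t) \<le> R / r * C"
proof -
  obtain \<alpha>0 where \<alpha>0: "0 < \<alpha>0" and \<alpha>_ge: "AE t in lebesgue. t > 0 \<longrightarrow> \<alpha>0 \<le> \<alpha> t"
    using \<alpha> by blast
  have "AE t in lebesgue. t > 0 \<longrightarrow> g t - \<alpha> t *\<^sub>R \<zeta>' t \<in> subdiff energy (\<zeta> t)"
    using sol unfolding is_solution_def by blast
  thus ?thesis
  proof eventually_elim
  case (elim t)
  show ?case
  proof
    assume t: "t > 0"
    hence \<xi>: "g t - \<alpha> t *\<^sub>R \<zeta>' t \<in> subdiff energy (\<zeta> t)" using elim by simp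
    have "norm (g t - \<alpha> t *\<^sub>R \<zeta>' t) \<le> f' (minkowski K (\<zeta> t)) / r"
      by (rule subgradient_norm_le[OF \<xi>])
    also have "\<dots> \<le> R * C / r"
      using trajectory_slope_bound[OF C initial g \<alpha>_ge \<alpha>0 sol _ subdiff_domain[OF \<xi>]] t r_pos
      by (simp add: divide_right_mono)
    finally show "norm (g t - \<alpha> t *\<^sub>R \<zeta>' t) \<le> R / r * C" by simp
  qed
qed
qed

end

theorem proposition3p3:
  fixes f :: "real \<Rightarrow> real" and f0 :: ereal and K :: "'a::euclidean_space set"
    and r R :: real
  assumes f0_pos: "f0 > 0"
    and f_nonneg: "\<forall>x. 0 \<le> x \<and> ereal x < f0 \<longrightarrow> 0 \<le> f x"
    and f_mono: "mono_on {x. 0 \<le> x \<and> ereal x < f0} f"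
    and f_convex: "convex_on {x. 0 \<le> x \<and> ereal x < f0} f"
    and f_C1: "\<exists>f'. (\<forall>x. 0 \<le> x \<and> ereal x < f0 \<longrightarrow>
                   (f has_real_derivative f' x) (at x within {x. 0 \<le> x \<and> ereal x < f0}))
                 \<and> continuous_on {x. 0 \<le> x \<and> ereal x < f0} f' \<and> f' 0 = 0"
    and f_zero: "f 0 = 0"
    and K_closed: "closed K" and K_convex: "convex K"
    and r_pos: "0 < r" and r_le_R: "r \<le> R"
    and inner_ball: "ball 0 r \<subseteq> K" and outer_ball: "K \<subseteq> cball 0 R"
  shows "property_X (phi_of f f0 K) (R / r)"
proof -
  obtain f' where deriv: "\<forall>x. 0 \<le> x \<and> ereal x < f0 \<longrightarrow>
                   (f has_real_derivative f' x) (at x within {x. 0 \<le> x \<and> ereal x < f0})"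
     and cont: "continuous_on {x. 0 \<le> x \<and> ereal x < f0} f'" and zero: "f' 0 = 0"
    using f_C1 by blast
  interpret gauge_energy K r R f f' f0
    by unfold_locales (use assms deriv cont zero in auto)
  show ?thesis
    unfolding property_X_def
    using solution_bound by (auto simp: less_imp_le)
qed

end
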